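(* Let $\boldsymbol{A}$ be the adjacency matrix of an undirected graph without self-loops on a finite vertex set $\boldsymbol{V}=\{1,\dots,N\}$. Let $\mathcal{R}_e\subset\boldsymbol{V}$ be a nonempty set of egos and $\mathcal{R}_a\subset\boldsymbol{V}\setminus\mathcal{R}_e$ a nonempty set of alters, $n_a=|\mathcal{R}_a|$, each alter $j$ having a unique recruiting ego $e(j)\in\mathcal{R}_e$ with $A_{j\,e(j)}=1$. Let $\widetilde{\boldsymbol{A}}$ have $\widetilde A_{ij}=\widetilde A_{ji}=1$ iff $i\in\mathcal{R}_a$ and $j=e(i)$ (other entries $0$), and $\widetilde F_i=\mathbb{I}\{\sum_{j\neq i}Z_j\widetilde A_{ij}>0\}$. Let $\boldsymbol{Z}\in\{0,1\}^N$ have independent components with $\Pr(Z_i=1)=p_z\,\mathbb{I}\{i\in\mathcal{R}_e\}$, $p_z\in(0,1)$. For an alter $i$, let $S_i=\sum_{j\neq i}Z_jA_{ij}$ and define the three-level exposure $F_i=0$ if $S_i=0$, $F_i=1$ if $S_i=1$, $F_i=2+$ if $S_i\ge2$. Each alter $i$ has fixed real potential outcomes $Y_i(0,0),Y_i(0,1),Y_i(0,2+)$ and observed outcome $Y_i=Y_i(0,F_i)$. Assume there is a constant $\delta$ with $Y_i(0,2+)-Y_i(0,1)=\delta[Y_i(0,1)-Y_i(0,0)]$ for all $i\in\mathcal{R}_a$. Let $S_{i,-e(i)}=\sum_{j\in\mathcal{R}_e\setminus\{e(i)\}}Z_jA_{ij}$, $\pi^*_{i,0}=\Pr(S_{i,-e(i)}=0)$,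 $\pi^*_{i,1}=\Pr(S_{i,-e(i)}=1)$ (over $\boldsymbol{Z}$), and assume $\pi^*_{i,0}+\pi^*_{i,1}\delta\neq0$ for all $i\in\mathcal{R}_a$. Define $$IE=\frac1{n_a}\sum_{i\in\mathcal{R}_a}[Y_i(0,1)-Y_i(0,0)],\qquad \widehat{IE}=\frac1{n_a}\sum_{i\in\mathcal{R}_a}\Big[\frac{\mathbb{I}\{\widetilde F_i=1\}Y_i}{p_z}-\frac{\mathbb{I}\{\widetilde F_i=0\}Y_i}{1-p_z}\Big],$$ $$\widehat{IE}_{adj}=\frac1{n_a}\sum_{i\in\mathcal{R}_a}\frac{1}{\pi^*_{i,0}+\pi^*_{i,1}\delta}\Big[\frac{\mathbb{I}\{\widetilde F_i=1\}Y_i}{p_z}-\frac{\mathbb{I}\{\widetilde F_i=0\}Y_i}{1-p_z}\Big].$$ Then $\mathbb{E}_{\boldsymbol{Z}}[\widehat{IE}]=\frac1{n_a}\sum_{i\in\mathcal{R}_a}(\pi^*_{i,0}+\pi^*_{i,1}\delta)[Y_i(0,1)-Y_i(0,0)]$ and $\mathbb{E}_{\boldsymbol{Z}}[\widehat{IE}_{adj}]=IE$.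
   Context: Design-based setting: the network, the sample, the recruitment map and the potential outcomes are fixed; only $\boldsymbol{Z}$ is random and expectations/probabilities are over $\boldsymbol{Z}$. Alters are never treated, so their outcomes depend only on the three-level exposure. *)

theory Defs
  imports "HOL-Probability.Probability"
begin

text \<open>Vertex set V = {1..N}; Z is a 0/1 vector encoded as a boolean function
(Z j = True means Z_j = 1), equal to False outside V.\<close>

datatype exposure = Exp0 | Exp1 | Exp2plus

definition Zdist :: "nat \<Rightarrow> nat set \<Rightarrow> real \<Rightarrow> (nat \<Rightarrow> bool) pmf" where
  "Zdist N Rego pz = Pi_pmf {1..N} False (\<lambda>i. bernoulli_pmf (pz * of_bool (i \<in> Rego)))"

definition S :: "nat \<Rightarrow> (nat \<Rightarrow> nat \<Rightarrow> bool) \<Rightarrow> (nat \<Rightarrow> bool) \<Rightarrow> nat \<Rightarrow> nat" where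
  "S N A Z i = (\<Sum>j\<in>{1..N} - {i}. of_bool (Z j) * of_bool (A i j))"

definition F :: "nat \<Rightarrow> (nat \<Rightarrow> nat \<Rightarrow> bool) \<Rightarrow> (nat \<Rightarrow> bool) \<Rightarrow> nat \<Rightarrow> exposure" where
  "F N A Z i = (if S N A Z i = 0 then Exp0 else if S N A Z i = 1 then Exp1 else Exp2plus)"

definition Atil :: "nat set \<Rightarrow> (nat \<Rightarrow> nat) \<Rightarrow> nat \<Rightarrow> nat \<Rightarrow> bool" where
  "Atil Ralt e i j = ((i \<in> Ralt \<and> j = e i) \<or> (j \<in> Ralt \<and> i = e j))"

definition Ftil :: "nat \<Rightarrow> nat set \<Rightarrow> (nat \<Rightarrow> nat) \<Rightarrow> (nat \<Rightarrow> bool) \<Rightarrow> nat \<Rightarrow> bool" where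
  "Ftil N Ralt e Z i = ((\<Sum>j\<in>{1..N} - {i}. of_bool (Z j) * of_bool (Atil Ralt e i j)) > (0::nat))"

definition Sminus :: "nat set \<Rightarrow> (nat \<Rightarrow> nat \<Rightarrow> bool) \<Rightarrow> (nat \<Rightarrow> nat) \<Rightarrow> (nat \<Rightarrow> bool) \<Rightarrow> nat \<Rightarrow> nat" where
  "Sminus Rego A e Z i = (\<Sum>j\<in>Rego - {e i}. of_bool (Z j) * of_bool (A i j))"

definition pistar0 :: "nat \<Rightarrow> nat set \<Rightarrow> real \<Rightarrow> (nat \<Rightarrow> nat \<Rightarrow> bool) \<Rightarrow> (nat \<Rightarrow> nat) \<Rightarrow> nat \<Rightarrow> real" where
  "pistar0 N Rego pz A e i = measure_pmf.prob (Zdist N Rego pz) {Z. Sminus Rego A e Z i = 0}"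

definition pistar1 :: "nat \<Rightarrow> nat set \<Rightarrow> real \<Rightarrow> (nat \<Rightarrow> nat \<Rightarrow> bool) \<Rightarrow> (nat \<Rightarrow> nat) \<Rightarrow> nat \<Rightarrow> real" where
  "pistar1 N Rego pz A e i = measure_pmf.prob (Zdist N Rego pz) {Z. Sminus Rego A e Z i = 1}"

text \<open>Observed outcome Y_i = Y_i(0, F_i); Y i f stands for Y_i(0,f).\<close>
definition Yobs :: "nat \<Rightarrow> (nat \<Rightarrow> nat \<Rightarrow> bool) \<Rightarrow> (nat \<Rightarrow> exposure \<Rightarrow> real) \<Rightarrow> (nat \<Rightarrow> bool) \<Rightarrow> nat \<Rightarrow> real" where
  "Yobs N A Y Z i = Y i (F N A Z i)"

definition IE :: "nat set \<Rightarrow> (nat \<Rightarrow> exposure \<Rightarrow> real) \<Rightarrow> real" where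
  "IE Ralt Y = (1 / real (card Ralt)) * (\<Sum>i\<in>Ralt. Y i Exp1 - Y i Exp0)"

definition IEhat :: "nat \<Rightarrow> nat set \<Rightarrow> (nat \<Rightarrow> nat) \<Rightarrow> (nat \<Rightarrow> nat \<Rightarrow> bool) \<Rightarrow> real \<Rightarrow>
    (nat \<Rightarrow> exposure \<Rightarrow> real) \<Rightarrow> (nat \<Rightarrow> bool) \<Rightarrow> real" where
  "IEhat N Ralt e A pz Y Z = (1 / real (card Ralt)) *
     (\<Sum>i\<in>Ralt. of_bool (Ftil N Ralt e Z i) * Yobs N A Y Z i / pz
            - of_bool (\<not> Ftil N Ralt e Z i) * Yobs N A Y Z i / (1 - pz))"

definition IEhat_adj :: "nat \<Rightarrow> nat set \<Rightarrow> nat set \<Rightarrow> (nat \<Rightarrow> nat) \<Rightarrow> (nat \<Rightarrow> nat \<Rightarrow> bool) \<Rightarrow> real \<Rightarrow> real \<Rightarrow>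
    (nat \<Rightarrow> exposure \<Rightarrow> real) \<Rightarrow> (nat \<Rightarrow> bool) \<Rightarrow> real" where
  "IEhat_adj N Rego Ralt e A pz \<delta> Y Z = (1 / real (card Ralt)) *
     (\<Sum>i\<in>Ralt. (1 / (pistar0 N Rego pz A e i + pistar1 N Rego pz A e i * \<delta>)) *
            (of_bool (Ftil N Ralt e Z i) * Yobs N A Y Z i / pz
             - of_bool (\<not> Ftil N Ralt e Z i) * Yobs N A Y Z i / (1 - pz)))"

end

theory Submission
  imports Defs
begin

text \<open>Fix an alter \<open>i\<close> and its recruiter \<open>k = e(i)\<close>. In the recruitment graph \<open>k\<close> is the only
  neighbour of \<open>i\<close>, so the recruitment exposure of \<open>i\<close> is \<open>Z\<^sub>k\<close>; and since only egos can be
  treated, \<open>S\<^sub>i = Z\<^sub>k + S\<^sub>i\<^sub>,\<^sub>-\<^sub>k\<close> with \<open>S\<^sub>i\<^sub>,\<^sub>-\<^sub>k\<close> independent of \<open>Z\<^sub>k\<close>. Averaging over \<open>Z\<^sub>k\<close> alone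
  cancels the inverse probability weights: the contrast of alter \<open>i\<close> has the expectation of
  \<open>Y\<^sub>i(0, F(1 + S\<^sub>i\<^sub>,\<^sub>-\<^sub>k)) - Y\<^sub>i(0, F(S\<^sub>i\<^sub>,\<^sub>-\<^sub>k))\<close>. By the \<open>\<delta>\<close>-assumption this increment is
  \<open>Y\<^sub>i(0,1) - Y\<^sub>i(0,0)\<close> times \<open>1\<close>, \<open>\<delta>\<close> or \<open>0\<close> according as \<open>S\<^sub>i\<^sub>,\<^sub>-\<^sub>k\<close> is \<open>0\<close>, \<open>1\<close> or larger,
  which produces the factor \<open>\<pi>\<^sup>*\<^sub>i\<^sub>,\<^sub>0 + \<pi>\<^sup>*\<^sub>i\<^sub>,\<^sub>1 \<delta>\<close>.\<close>

lemma finite_set_pmf_Pi_pmf: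
  assumes "finite I" "\<And>i. i \<in> I \<Longrightarrow> finite (set_pmf (P i))"
  shows "finite (set_pmf (Pi_pmf I dflt P))"
  using assms by (auto simp: set_Pi_pmf)

lemma expectation_pair_pmf_finite:
  fixes G :: "'a \<times> 'b \<Rightarrow> real"
  assumes p: "finite (set_pmf p)" and q: "finite (set_pmf q)"
  shows "measure_pmf.expectation (pair_pmf p q) G
       = measure_pmf.expectation p (\<lambda>x. measure_pmf.expectation q (\<lambda>y. G (x, y)))"
proof -
  have "measure_pmf.expectation (pair_pmf p q) G
      = (\<Sum>z\<in>set_pmf p \<times> set_pmf q. pmf (pair_pmf p q) z * G z)"
    using p q by (subst integral_measure_pmf[of "set_pmf p \<times> set_pmf q"]) auto
  also have "\<dots> = (\<Sum>x\<in>set_pmf p. pmf p x * (\<Sum>y\<in>set_pmf q. pmf q y * G (x, y)))"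
    unfolding sum_distrib_left sum.cartesian_product by (intro sum.cong) (auto simp: pmf_pair)
  also have "\<dots> = measure_pmf.expectation p (\<lambda>x. measure_pmf.expectation q (\<lambda>y. G (x, y)))"
    using p q by (simp add: integral_measure_pmf[of "set_pmf p"] integral_measure_pmf[of "set_pmf q"])
  finally show ?thesis .
qed

lemma expectation_Pi_pmf_insert:
  fixes G :: "('a \<Rightarrow> 'b) \<Rightarrow> real"
  assumes "finite I" "k \<notin> I" "\<And>i. finite (set_pmf (P i))"
  shows "measure_pmf.expectation (Pi_pmf (insert k I) dflt P) G
       = measure_pmf.expectation (P k) (\<lambda>y. measure_pmf.expectation (Pi_pmf I dflt P) (\<lambda>f. G (f(k := y))))"
proof -
  have "finite (set_pmf (Pi_pmf I dflt P))"
    using assms by (intro finite_set_pmf_Pi_pmf)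
  then show ?thesis
    using assms by (simp add: Pi_pmf_insert case_prod_beta' expectation_pair_pmf_finite)
qed

lemma expectation_Pi_pmf_bernoulli_branch:
  fixes P :: "'a \<Rightarrow> bool pmf" and h :: "('a \<Rightarrow> bool) \<Rightarrow> 'c" and u v :: "'c \<Rightarrow> real"
  assumes "finite I" "k \<in> I" "P k = bernoulli_pmf p" "0 \<le> p" "p \<le> 1"
    and h: "\<And>Z y. h (Z(k := y)) = h Z"
  shows "measure_pmf.expectation (Pi_pmf I dflt P) (\<lambda>Z. if Z k then u (h Z) else v (h Z))
       = measure_pmf.expectation (Pi_pmf I dflt P) (\<lambda>Z. p * u (h Z) + (1 - p) * v (h Z))"
proof -
  let ?q = "Pi_pmf (I - {k}) dflt P"
  have I: "I = insert k (I - {k})" using assms by blast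
  have fin: "\<And>i. finite (set_pmf (P i))" by simp
  have int: "integrable ?q g" for g :: "('a \<Rightarrow> bool) \<Rightarrow> real"
    using assms fin by (intro integrable_measure_pmf_finite finite_set_pmf_Pi_pmf) auto
  have split: "measure_pmf.expectation (Pi_pmf I dflt P) G
      = p * measure_pmf.expectation ?q (\<lambda>f. G (f(k := True)))
        + (1 - p) * measure_pmf.expectation ?q (\<lambda>f. G (f(k := False)))" for G
    using assms fin by (subst I, subst expectation_Pi_pmf_insert) (auto simp: mult.commute)
  show ?thesis
    unfolding split using int by (simp add: h algebra_simps)
qed

lemma expectation_of_bool:
  "measure_pmf.expectation p (\<lambda>x. of_bool (P x) :: real) = measure_pmf.prob p {x. P x}"
  by (simp flip: indicator_def[of "{x. P x}", unfolded mem_Collect_eq])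

lemma finite_set_pmf_Zdist: "finite (set_pmf (Zdist N Rego pz))"
  unfolding Zdist_def by (rule finite_set_pmf_Pi_pmf) simp_all

lemma set_pmf_Zdist_treated_in_Rego:
  assumes "Z \<in> set_pmf (Zdist N Rego pz)" "Z j"
  shows "j \<in> Rego"
proof -
  have "Z \<in> PiE_dflt {1..N} False (set_pmf \<circ> (\<lambda>i. bernoulli_pmf (pz * of_bool (i \<in> Rego))))"
    using assms(1) by (simp add: Zdist_def set_Pi_pmf)
  then have "\<forall>x. (x \<in> {1..N} \<longrightarrow> Z x \<in> (set_pmf \<circ> (\<lambda>i. bernoulli_pmf (pz * of_bool (i \<in> Rego)))) x)
                \<and> (x \<notin> {1..N} \<longrightarrow> Z x = False)"
    unfolding PiE_dflt_def by (rule CollectD)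
  then have "Z j \<in> set_pmf (bernoulli_pmf (pz * of_bool (j \<in> Rego)))"
    using assms(2) by (metis comp_apply)
  then show ?thesis
    using assms(2) by (cases "j \<in> Rego") (simp_all add: set_pmf_eq)
qed

definition exposure_of :: "nat \<Rightarrow> exposure" where
  "exposure_of s = (if s = 0 then Exp0 else if s = 1 then Exp1 else Exp2plus)"

lemma F_eq_exposure_of: "F N A Z i = exposure_of (S N A Z i)"
  unfolding F_def exposure_of_def ..

lemma exposure_of_Suc_increment:
  fixes Yf :: "exposure \<Rightarrow> real"
  assumes "Yf Exp2plus - Yf Exp1 = \<delta> * (Yf Exp1 - Yf Exp0)"
  shows "Yf (exposure_of (Suc s)) - Yf (exposure_of s)
       = (of_bool (s = 0) + of_bool (s = 1) * \<delta>) * (Yf Exp1 - Yf Exp0)"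
  using assms by (cases "s = 0"; cases "s = 1") (simp_all add: exposure_of_def)

lemma Sminus_fun_upd_recruiter: "Sminus Rego A e (Z(e i := y)) i = Sminus Rego A e Z i"
  unfolding Sminus_def by (intro sum.cong) auto

lemma Ftil_alter_eq_recruiter:
  assumes "Rego \<subseteq> {1..N}" "Ralt \<subseteq> {1..N} - Rego" "\<forall>j\<in>Ralt. e j \<in> Rego" "i \<in> Ralt"
  shows "Ftil N Ralt e Z i = Z (e i)"
proof -
  have "Atil Ralt e i j \<longleftrightarrow> j = e i" for j
    using assms unfolding Atil_def by auto
  moreover have "e i \<in> {1..N} - {i}"
    using assms by fastforce
  ultimately have "(\<Sum>j\<in>{1..N} - {i}. of_bool (Z j) * of_bool (Atil Ralt e i j))
      = (\<Sum>j\<in>{1..N} - {i}. if j = e i then of_bool (Z (e i)) else (0::nat))"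
    by (intro sum.cong) auto
  with \<open>e i \<in> {1..N} - {i}\<close> show ?thesis
    unfolding Ftil_def by simp
qed

lemma S_alter_split_recruiter:
  assumes "Rego \<subseteq> {1..N}" "i \<notin> Rego" "e i \<in> Rego" "A i (e i)"
    and "\<And>j. Z j \<Longrightarrow> j \<in> Rego"
  shows "S N A Z i = of_bool (Z (e i)) + Sminus Rego A e Z i"
proof -
  have "S N A Z i = (\<Sum>j\<in>Rego. of_bool (Z j) * of_bool (A i j))"
    unfolding S_def using assms by (intro sum.mono_neutral_right) auto
  also have "\<dots> = of_bool (Z (e i)) * of_bool (A i (e i)) + Sminus Rego A e Z i"
    unfolding Sminus_def using assms finite_subset[OF assms(1)] by (intro sum.remove) auto
  also have "\<dots> = of_bool (Z (e i)) + Sminus Rego A e Z i"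
    using assms by simp
  finally show ?thesis .
qed

definition ipw_contrast :: "nat \<Rightarrow> nat set \<Rightarrow> (nat \<Rightarrow> nat) \<Rightarrow> (nat \<Rightarrow> nat \<Rightarrow> bool) \<Rightarrow> real \<Rightarrow>
    (nat \<Rightarrow> exposure \<Rightarrow> real) \<Rightarrow> nat \<Rightarrow> (nat \<Rightarrow> bool) \<Rightarrow> real" where
  "ipw_contrast N Ralt e A pz Y i Z =
     of_bool (Ftil N Ralt e Z i) * Yobs N A Y Z i / pz
     - of_bool (\<not> Ftil N Ralt e Z i) * Yobs N A Y Z i / (1 - pz)"

lemma ipw_contrast_alter_on_support:
  assumes "Rego \<subseteq> {1..N}" "Ralt \<subseteq> {1..N} - Rego" "\<forall>j\<in>Ralt. e j \<in> Rego \<and> A j (e j)"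
    and "i \<in> Ralt" "Z \<in> set_pmf (Zdist N Rego pz)"
  shows "ipw_contrast N Ralt e A pz Y i Z =
    (if Z (e i) then Y i (exposure_of (Suc (Sminus Rego A e Z i))) / pz
     else - Y i (exposure_of (Sminus Rego A e Z i)) / (1 - pz))"
proof -
  have "Ftil N Ralt e Z i = Z (e i)"
    using assms by (intro Ftil_alter_eq_recruiter) auto
  moreover have "S N A Z i = of_bool (Z (e i)) + Sminus Rego A e Z i"
    using assms set_pmf_Zdist_treated_in_Rego by (intro S_alter_split_recruiter) auto
  ultimately show ?thesis
    unfolding ipw_contrast_def Yobs_def F_eq_exposure_of by simp
qed

lemma expectation_ipw_contrast_alter:
  assumes Re_sub: "Rego \<subseteq> {1..N}" and Ra_sub: "Ralt \<subseteq> {1..N} - Rego"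
    and e_rec: "\<forall>j\<in>Ralt. e j \<in> Rego \<and> A j (e j)"
    and pz: "0 < pz" "pz < 1" and i: "i \<in> Ralt"
    and delta: "Y i Exp2plus - Y i Exp1 = \<delta> * (Y i Exp1 - Y i Exp0)"
  shows "measure_pmf.expectation (Zdist N Rego pz) (ipw_contrast N Ralt e A pz Y i)
       = (pistar0 N Rego pz A e i + pistar1 N Rego pz A e i * \<delta>) * (Y i Exp1 - Y i Exp0)"
proof -
  let ?Z = "Zdist N Rego pz"
  let ?s = "\<lambda>Z. Sminus Rego A e Z i"
  have "measure_pmf.expectation ?Z (ipw_contrast N Ralt e A pz Y i)
      = measure_pmf.expectation ?Z (\<lambda>Z. if Z (e i) then Y i (exposure_of (Suc (?s Z))) / pz
                                          else - Y i (exposure_of (?s Z)) / (1 - pz))"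
    by (intro integral_cong_AE)
       (simp_all add: AE_measure_pmf_iff ipw_contrast_alter_on_support[of Rego N Ralt e A i, OF Re_sub Ra_sub e_rec i])
  also have "\<dots> = measure_pmf.expectation ?Z (\<lambda>Z. pz * (Y i (exposure_of (Suc (?s Z))) / pz)
                                           + (1 - pz) * (- Y i (exposure_of (?s Z)) / (1 - pz)))"
    unfolding Zdist_def
    by (rule expectation_Pi_pmf_bernoulli_branch[where h = ?s])
       (use Re_sub e_rec i pz in \<open>auto simp: Sminus_fun_upd_recruiter\<close>)
  also have "\<dots> = measure_pmf.expectation ?Z
      (\<lambda>Z. (of_bool (?s Z = 0) + of_bool (?s Z = 1) * \<delta>) * (Y i Exp1 - Y i Exp0))"
    using pz by (simp add: exposure_of_Suc_increment[OF delta])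
  also have "\<dots> = (pistar0 N Rego pz A e i + pistar1 N Rego pz A e i * \<delta>) * (Y i Exp1 - Y i Exp0)"
    by (simp add: distrib_right integrable_measure_pmf_finite[OF finite_set_pmf_Zdist]
                  expectation_of_bool pistar0_def pistar1_def)
  finally show ?thesis .
qed

theorem mainTheorem5:
  fixes N :: nat and A :: "nat \<Rightarrow> nat \<Rightarrow> bool"
    and Rego Ralt :: "nat set" and e :: "nat \<Rightarrow> nat"
    and pz \<delta> :: real and Y :: "nat \<Rightarrow> exposure \<Rightarrow> real"
  assumes A_sym: "\<forall>i j. A i j = A j i"
    and A_noloop: "\<forall>i. \<not> A i i"
    and A_V: "\<forall>i j. A i j \<longrightarrow> i \<in> {1..N} \<and> j \<in> {1..N}"
    and Re_sub: "Rego \<subseteq> {1..N}" and Re_ne: "Rego \<noteq> {}"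
    and Ra_sub: "Ralt \<subseteq> {1..N} - Rego" and Ra_ne: "Ralt \<noteq> {}"
    and e_rec: "\<forall>j\<in>Ralt. e j \<in> Rego \<and> A j (e j)"
    and pz: "0 < pz" "pz < 1"
    and delta: "\<forall>i\<in>Ralt. Y i Exp2plus - Y i Exp1 = \<delta> * (Y i Exp1 - Y i Exp0)"
    and nonzero: "\<forall>i\<in>Ralt. pistar0 N Rego pz A e i + pistar1 N Rego pz A e i * \<delta> \<noteq> 0"
  shows "measure_pmf.expectation (Zdist N Rego pz) (IEhat N Ralt e A pz Y)
           = (1 / real (card Ralt)) * (\<Sum>i\<in>Ralt. (pistar0 N Rego pz A e i + pistar1 N Rego pz A e i * \<delta>)
                                              * (Y i Exp1 - Y i Exp0))
         \<and> measure_pmf.expectation (Zdist N Rego pz) (IEhat_adj N Rego Ralt e A pz \<delta> Y) = IE Ralt Y"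
proof -
  let ?Z = "Zdist N Rego pz"
  let ?c = "\<lambda>i. pistar0 N Rego pz A e i + pistar1 N Rego pz A e i * \<delta>"
  have int: "integrable ?Z g" for g :: "(nat \<Rightarrow> bool) \<Rightarrow> real"
    by (rule integrable_measure_pmf_finite[OF finite_set_pmf_Zdist])
  have contrast: "measure_pmf.expectation ?Z (ipw_contrast N Ralt e A pz Y i) = ?c i * (Y i Exp1 - Y i Exp0)"
    if "i \<in> Ralt" for i
    using that delta
    by (intro expectation_ipw_contrast_alter[of Rego N Ralt e A, OF Re_sub Ra_sub e_rec pz]) auto
  have "measure_pmf.expectation ?Z (IEhat N Ralt e A pz Y)
      = (1 / real (card Ralt)) * (\<Sum>i\<in>Ralt. measure_pmf.expectation ?Z (ipw_contrast N Ralt e A pz Y i))"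
    unfolding IEhat_def ipw_contrast_def[symmetric] by (simp add: int Bochner_Integration.integral_sum)
  moreover have "measure_pmf.expectation ?Z (IEhat_adj N Rego Ralt e A pz \<delta> Y)
      = (1 / real (card Ralt))
        * (\<Sum>i\<in>Ralt. 1 / ?c i * measure_pmf.expectation ?Z (ipw_contrast N Ralt e A pz Y i))"
    unfolding IEhat_adj_def ipw_contrast_def[symmetric] by (simp add: int Bochner_Integration.integral_sum)
  ultimately show ?thesis
    using contrast nonzero by (simp add: IE_def)
qed

end
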